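(* Let $n \geq 2$ be an integer, let $\mathcal{V}_1,\mathcal{V}_2$ be vector spaces over a field $\mathbb{F}$, and let $E=\{x_a \otimes y_a: a \in[n] \}$ be a multiset of product tensors in $\mathcal{V}_1\otimes\mathcal{V}_2$ (with $x_a\in\mathcal{V}_1\setminus\{0\}$, $y_a\in\mathcal{V}_2\setminus\{0\}$). Let $d_1=\dim\operatorname{span} \{ x_a: a \in [n]\}$ and $d_2=\dim\operatorname{span} \{ y_a: a \in [n]\}$. If $E$ is connected, then $\dim\operatorname{span}(E)\geq d_1+d_2-1$.
   Context: $[n]=\{1,\dots,n\}$. A multiset of non-zero vectors $\{v_1,\dots,v_n\}$ ($n\ge2$) splits if there is a sub-multiset $S$ with $1\le |S|\le n-1$ such that $\operatorname{span}\{v_1,\dots,v_n\}=\operatorname{span}(S)\oplus\operatorname{span}(S^c)$, where $S^c$ is the complementary sub-multiset; it is connected if it does not split. *)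

theory Defs
  imports Complex_Main "HOL-Library.Function_Algebras"
begin

text \<open>Vector spaces are modelled as spaces of functions from an index type into the
field, with pointwise scalar multiplication (every vector space embeds linearly
into such a space).\<close>

definition fscale :: "'a::field \<Rightarrow> ('i \<Rightarrow> 'a) \<Rightarrow> ('i \<Rightarrow> 'a)" where
  "fscale c f = (\<lambda>i. c * f i)"

lemma vector_space_fscale: "vector_space (fscale :: 'a::field \<Rightarrow> ('i \<Rightarrow> 'a) \<Rightarrow> _)"
  by unfold_locales (auto simp: fscale_def algebra_simps)

abbreviation fspan :: "('i \<Rightarrow> 'a::field) set \<Rightarrow> ('i \<Rightarrow> 'a) set" where
  "fspan \<equiv> module.span fscale"

abbreviation fdim :: "('i \<Rightarrow> 'a::field) set \<Rightarrow> nat" where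
  "fdim \<equiv> vector_space.dim fscale"

text \<open>Product tensor: x \<otimes> y realised as the function (i,j) \<mapsto> x i * y j
(the canonical injective embedding of the algebraic tensor product).\<close>

definition tprod :: "('i \<Rightarrow> 'a::field) \<Rightarrow> ('j \<Rightarrow> 'a) \<Rightarrow> ('i \<times> 'j \<Rightarrow> 'a)" where
  "tprod x y = (\<lambda>(i, j). x i * y j)"

text \<open>A multiset {v_1,...,v_n} is given as an indexed family v on [n] = {1..n}.
A sub-multiset S corresponds to a subset of the index set.\<close>

definition splits :: "nat \<Rightarrow> (nat \<Rightarrow> ('i \<Rightarrow> 'a::field)) \<Rightarrow> bool" where
  "splits n v \<longleftrightarrow> (\<exists>S. S \<subseteq> {1..n} \<and> 1 \<le> card S \<and> card S \<le> n - 1 \<and>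
     fspan (v ` {1..n}) =
       {p + q | p q. p \<in> fspan (v ` S) \<and> q \<in> fspan (v ` ({1..n} - S))} \<and>
     fspan (v ` S) \<inter> fspan (v ` ({1..n} - S)) = {0})"

definition connected_family :: "nat \<Rightarrow> (nat \<Rightarrow> ('i \<Rightarrow> 'a::field)) \<Rightarrow> bool" where
  "connected_family n v \<longleftrightarrow> \<not> splits n v"

end

theory Submission
  imports Defs
begin

text \<open>Let \<open>E = [n]\<close>, \<open>t\<^sub>a = x\<^sub>a \<otimes> y\<^sub>a\<close>, and call \<open>dim span x(U) + dim span y(U) - dim span t(U)\<close>
the excess of \<open>U \<subseteq> E\<close>. A singleton has excess 1, so it suffices that the excess does not
increase along a chain of sets growing from \<open>{1}\<close> to \<open>E\<close>. If \<open>U \<noteq> E\<close>, connectedness makes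
\<open>span t(U) \<inter> span t(E - U)\<close> nontrivial; among its nonzero vectors \<open>\<Sum> c\<^sub>d t\<^sub>d\<close> (sum over
\<open>d \<in> D \<subseteq> E - U\<close>) take one with \<open>D\<close> minimal. By minimality, \<open>D\<close> minus any one index is
independent modulo \<open>span t(U)\<close>, so passing from \<open>U\<close> to \<open>U \<union> D\<close> raises \<open>dim span t\<close> by at
least \<open>|D| - 1\<close>. Let \<open>B \<subseteq> D\<close> index a basis of \<open>x(D)\<close> modulo \<open>span x(U)\<close>. Every column of
the relation is a relation among the \<open>x\<^sub>d\<close> modulo \<open>span x(U)\<close>; expanding the \<open>x\<^sub>d\<close>, \<open>d \<notin> B\<close>,
in that basis shows \<open>y\<^sub>b \<in> span y(D - B)\<close> for \<open>b \<in> B\<close>, while a nonzero row of the relation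
lies in \<open>span y(U) \<inter> span y(D - B)\<close>. So \<open>dim span x\<close> rises by at most \<open>|B|\<close> and
\<open>dim span y\<close> by at most \<open>|D - B| - 1\<close>.\<close>

interpretation fs: vector_space "fscale :: 'a::field \<Rightarrow> ('i \<Rightarrow> 'a) \<Rightarrow> ('i \<Rightarrow> 'a)"
  by (rule vector_space_fscale)

lemma sum_apply: "(\<Sum>k\<in>K. f k) i = (\<Sum>k\<in>K. f k i)"
  by (induction K rule: infinite_finite_induct) auto

text \<open>The library versions of the next two facts (\<open>dim_mono\<close>, \<open>dim_insert\<close>) assume a
finite-dimensional ambient space, which a function space \<open>'i \<Rightarrow> 'a\<close> need not be; finiteness of
the spanning sets suffices.\<close>

lemma dim_mono_finite:
  assumes "V \<subseteq> fspan W" "finite W"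
  shows "fdim V \<le> fdim W"
proof -
  obtain B where B: "B \<subseteq> W" "fs.independent B" "W \<subseteq> fspan B" "card B = fdim W"
    using fs.basis_exists .
  have "V \<subseteq> fspan B"
    using assms(1) fs.span_minimal[OF B(3) fs.subspace_span] by blast
  then show ?thesis
    using fs.dim_le_card B(1,4) assms(2) finite_subset by metis
qed

lemma dim_insert_finite:
  assumes "finite S"
  shows "fdim (insert a S) = (if a \<in> fspan S then fdim S else fdim S + 1)"
proof (cases "a \<in> fspan S")
  case True
  then have "fspan (insert a S) = fspan S"
    by (rule fs.span_redundant)
  with True show ?thesis
    by (metis fs.dim_span)
next
  case False
  obtain B where B: "B \<subseteq> S" "fs.independent B" "S \<subseteq> fspan B" "card B = fdim S"
    using fs.basis_exists .
  have "fspan B = fspan S"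
    using B(1,3) fs.span_eq fs.span_superset by blast
  then have "a \<notin> fspan B"
    using False by simp
  then have "fs.independent (insert a B)"
    using B(2) by (rule fs.independent_insertI)
  moreover have "insert a S \<subseteq> fspan (insert a B)"
    using B(3) fs.span_mono[of B "insert a B"] fs.span_base[of a "insert a B"] by auto
  ultimately have "card (insert a B) = fdim (insert a S)"
    using B(1) by (intro fs.basis_card_eq_dim) auto
  moreover have "a \<notin> B"
    using \<open>a \<notin> fspan B\<close> fs.span_base by blast
  ultimately show ?thesis
    using False B(1,4) assms finite_subset by fastforce
qed

lemma in_span_if_sum_in_span:
  assumes "finite K" "k \<in> K" "c k \<noteq> 0" "(\<Sum>i\<in>K. fscale (c i) (g i)) \<in> fspan S"
    and "\<And>i. i \<in> K - {k} \<Longrightarrow> g i \<in> fspan S"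
  shows "g k \<in> fspan S"
proof -
  have "fscale (c k) (g k) = (\<Sum>i\<in>K. fscale (c i) (g i)) - (\<Sum>i\<in>K - {k}. fscale (c i) (g i))"
    using sum.remove[OF assms(1,2), of "\<lambda>i. fscale (c i) (g i)"] by simp
  also have "\<dots> \<in> fspan S"
    using assms(5) by (intro fs.span_diff[OF assms(4)] fs.span_sum fs.span_scale) auto
  finally show ?thesis
    using fs.span_scale[of "fscale (c k) (g k)" S "inverse (c k)"] assms(3) by simp
qed

lemma span_Un_imageE:
  assumes "finite K" "z \<in> fspan (A \<union> g ` K)"
  obtains u c where "u \<in> fspan A" "z = u + (\<Sum>k\<in>K. fscale (c k) (g k))"
proof -
  have "\<exists>u c. u \<in> fspan A \<and> z = u + (\<Sum>k\<in>K. fscale (c k) (g k))"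
    using assms
  proof (induction K arbitrary: z rule: finite_induct)
    case empty
    then show ?case by auto
  next
    case (insert k K)
    then obtain a where "z - fscale a (g k) \<in> fspan (A \<union> g ` K)"
      using fs.span_breakdown_eq[of z "g k" "A \<union> g ` K"] by auto
    with insert.IH obtain u c where "u \<in> fspan A" "z - fscale a (g k) = u + (\<Sum>k\<in>K. fscale (c k) (g k))"
      by blast
    moreover have "(\<Sum>i\<in>K. fscale ((c(k := a)) i) (g i)) = (\<Sum>i\<in>K. fscale (c i) (g i))"
      using insert.hyps(2) by (intro sum.cong) auto
    then have "(\<Sum>i\<in>insert k K. fscale ((c(k := a)) i) (g i)) = fscale a (g k) + (\<Sum>i\<in>K. fscale (c i) (g i))"
      using insert.hyps by simp
    ultimately show ?case
      by (intro exI[of _ u] exI[of _ "c(k := a)"]) (simp add: algebra_simps)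
  qed
  then show ?thesis using that by blast
qed

lemma dim_Un_image_le:
  assumes "finite A" "finite K"
  shows "fdim (A \<union> g ` K) \<le> fdim A + card K"
  using assms(2)
proof (induction K rule: finite_induct)
  case (insert k K)
  have "fdim (A \<union> g ` insert k K) = fdim (insert (g k) (A \<union> g ` K))"
    by simp
  also have "\<dots> \<le> fdim (A \<union> g ` K) + 1"
    using assms(1) insert.hyps by (simp add: dim_insert_finite)
  finally show ?case
    using insert by simp
qed simp

lemma dim_Un_le_if_spanning:
  assumes "finite A" "finite B" "g ` D \<subseteq> fspan (A \<union> g ` B)"
  shows "fdim (A \<union> g ` D) \<le> fdim A + card B"
proof -
  have "A \<union> g ` D \<subseteq> fspan (A \<union> g ` B)"
    using assms(3) fs.span_superset[of "A \<union> g ` B"] by blast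
  then have "fdim (A \<union> g ` D) \<le> fdim (A \<union> g ` B)"
    using assms(1,2) by (intro dim_mono_finite) auto
  also have "\<dots> \<le> fdim A + card B"
    using assms(1,2) by (rule dim_Un_image_le)
  finally show ?thesis .
qed

definition independent_mod :: "('i \<Rightarrow> 'a::field) set \<Rightarrow> ('k \<Rightarrow> 'i \<Rightarrow> 'a) \<Rightarrow> 'k set \<Rightarrow> bool" where
  "independent_mod A g K \<longleftrightarrow> (\<forall>c. (\<Sum>k\<in>K. fscale (c k) (g k)) \<in> fspan A \<longrightarrow> (\<forall>k\<in>K. c k = 0))"

lemma independent_modD:
  "independent_mod A g K \<Longrightarrow> (\<Sum>k\<in>K. fscale (c k) (g k)) \<in> fspan A \<Longrightarrow> k \<in> K \<Longrightarrow> c k = 0"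
  unfolding independent_mod_def by blast

lemma independent_mod_subset:
  assumes "independent_mod A g K" "K' \<subseteq> K" "finite K"
  shows "independent_mod A g K'"
  unfolding independent_mod_def
proof (intro allI impI ballI)
  fix c k
  assume "(\<Sum>i\<in>K'. fscale (c i) (g i)) \<in> fspan A" "k \<in> K'"
  moreover have "(\<Sum>i\<in>K. fscale (if i \<in> K' then c i else 0) (g i)) = (\<Sum>i\<in>K'. fscale (c i) (g i))"
    using assms(2,3) by (intro sum.mono_neutral_cong_right) auto
  ultimately have "(if k \<in> K' then c k else 0) = 0"
    using independent_modD[OF assms(1), of "\<lambda>i. if i \<in> K' then c i else 0" k] assms(2) by auto
  then show "c k = 0"
    using \<open>k \<in> K'\<close> by simp
qed

lemma not_in_span_if_independent_mod:
  assumes "independent_mod A g (insert k K)" "finite K" "k \<notin> K"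
  shows "g k \<notin> fspan (A \<union> g ` K)"
proof
  assume "g k \<in> fspan (A \<union> g ` K)"
  then obtain u c where u: "u \<in> fspan A" "g k = u + (\<Sum>i\<in>K. fscale (c i) (g i))"
    using span_Un_imageE assms(2) by blast
  have "(\<Sum>i\<in>K. fscale (((\<lambda>i. - c i)(k := 1)) i) (g i)) = (\<Sum>i\<in>K. - fscale (c i) (g i))"
    using assms(3) by (intro sum.cong) auto
  then have "(\<Sum>i\<in>insert k K. fscale (((\<lambda>i. - c i)(k := 1)) i) (g i)) = g k - (\<Sum>i\<in>K. fscale (c i) (g i))"
    using assms(2,3) by (simp add: sum_negf)
  then have "(\<Sum>i\<in>insert k K. fscale (((\<lambda>i. - c i)(k := 1)) i) (g i)) \<in> fspan A"
    using u by simp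
  then show False
    using independent_modD[OF assms(1), of "(\<lambda>i. - c i)(k := 1)" k] by simp
qed

lemma dim_Un_image_eq:
  assumes "finite A" "finite K" "independent_mod A g K"
  shows "fdim (A \<union> g ` K) = fdim A + card K"
  using assms(2,3)
proof (induction K rule: finite_induct)
  case (insert k K)
  have "fdim (A \<union> g ` insert k K) = fdim (insert (g k) (A \<union> g ` K))"
    by simp
  also have "\<dots> = fdim (A \<union> g ` K) + 1"
    using assms(1) insert not_in_span_if_independent_mod by (simp add: dim_insert_finite)
  moreover have "independent_mod A g K"
    using independent_mod_subset[OF insert.prems subset_insertI] insert.hyps(1) by simp
  ultimately show ?case
    using insert by simp
qed simp

lemma dim_Un_image_less:
  assumes "finite A" "finite K" "z \<in> fspan A" "z \<in> fspan (g ` K)" "z \<noteq> 0"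
  shows "fdim (A \<union> g ` K) < fdim A + card K"
proof -
  obtain u c where "u \<in> fspan {}" "z = u + (\<Sum>k\<in>K. fscale (c k) (g k))"
    using span_Un_imageE[of K z "{}" g] assms(2,4) by auto
  then have z: "z = (\<Sum>k\<in>K. fscale (c k) (g k))"
    by simp
  have "\<exists>k\<in>K. c k \<noteq> 0"
  proof (rule ccontr)
    assume "\<not> (\<exists>k\<in>K. c k \<noteq> 0)"
    then show False
      using z assms(5) by (simp add: sum.neutral)
  qed
  then obtain k where k: "k \<in> K" "c k \<noteq> 0"
    by blast
  let ?S = "A \<union> g ` (K - {k})"
  have "z \<in> fspan ?S"
    using assms(3) fs.span_mono[of A ?S] by blast
  moreover have "g i \<in> fspan ?S" if "i \<in> K - {k}" for i
    using that by (intro fs.span_base) blast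
  ultimately have "g k \<in> fspan ?S"
    using in_span_if_sum_in_span[of K k c g ?S] assms(2) k z by blast
  then have "A \<union> g ` K \<subseteq> fspan ?S"
    using k(1) fs.span_superset[of ?S] by auto
  then have "fdim (A \<union> g ` K) \<le> fdim ?S"
    using assms(1,2) by (intro dim_mono_finite) auto
  also have "\<dots> \<le> fdim A + card (K - {k})"
    using assms(1,2) by (intro dim_Un_image_le) auto
  moreover have "card K > 0"
    using k(1) assms(2) card_gt_0_iff by blast
  ultimately show ?thesis
    using k(1) assms(2) by simp
qed

lemma independent_mod_spanning_subset:
  assumes "finite D"
  obtains B where "B \<subseteq> D" "g ` D \<subseteq> fspan (A \<union> g ` B)" "independent_mod A g B"
proof -
  have "\<exists>B\<subseteq>D. g ` D \<subseteq> fspan (A \<union> g ` B) \<and> independent_mod A g B"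
    using assms
  proof (induction "card D" arbitrary: D rule: less_induct)
    case less
    show ?case
    proof (cases "independent_mod A g D")
      case True
      then show ?thesis
        by (intro exI[of _ D]) (auto intro: fs.span_base)
    next
      case False
      then obtain c d where d: "(\<Sum>k\<in>D. fscale (c k) (g k)) \<in> fspan A" "d \<in> D" "c d \<noteq> 0"
        unfolding independent_mod_def by blast
      obtain B where B: "B \<subseteq> D - {d}" "g ` (D - {d}) \<subseteq> fspan (A \<union> g ` B)"
        "independent_mod A g B"
        using less.hyps[OF card_Diff1_less[OF less.prems d(2)]] less.prems by blast
      have "A \<subseteq> fspan (A \<union> g ` B)"
        using fs.span_superset by blast
      then have "fspan A \<subseteq> fspan (A \<union> g ` B)"
        using fs.span_minimal fs.subspace_span by blast
      then have "g d \<in> fspan (A \<union> g ` B)"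
        using in_span_if_sum_in_span[of D d c g "A \<union> g ` B"] less.prems d B(2)
        by (blast dest: image_subset_iff[THEN iffD1])
      then show ?thesis
        using B by (intro exI[of _ B]) auto
    qed
  qed
  then show ?thesis
    using that by blast
qed

lemma expansion_coefficient_eq_0:
  assumes "independent_mod A g B" "finite B" "finite K" "B \<inter> K = {}"
    and "\<And>d. d \<in> K \<Longrightarrow> u d \<in> fspan A"
    and "\<And>d. d \<in> K \<Longrightarrow> g d = u d + (\<Sum>b\<in>B. fscale (m d b) (g b))"
    and "(\<Sum>d\<in>B \<union> K. fscale (a d) (g d)) \<in> fspan A" "b \<in> B"
  shows "a b + (\<Sum>d\<in>K. a d * m d b) = 0"
proof -
  define s where "s b = (\<Sum>d\<in>K. a d * m d b)" for b
  have "(\<Sum>d\<in>K. fscale (a d) (g d))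
      = (\<Sum>d\<in>K. fscale (a d) (u d)) + (\<Sum>d\<in>K. \<Sum>b\<in>B. fscale (a d * m d b) (g b))"
    using assms(6) by (simp add: fs.scale_right_distrib fs.scale_sum_right sum.distrib cong: sum.cong)
  also have "(\<Sum>d\<in>K. \<Sum>b\<in>B. fscale (a d * m d b) (g b)) = (\<Sum>b\<in>B. fscale (s b) (g b))"
    by (simp add: s_def sum.swap[of _ K B] fs.scale_sum_left)
  finally have "(\<Sum>d\<in>K. fscale (a d) (g d)) = (\<Sum>d\<in>K. fscale (a d) (u d)) + (\<Sum>b\<in>B. fscale (s b) (g b))" .
  moreover have "(\<Sum>d\<in>B \<union> K. fscale (a d) (g d)) = (\<Sum>d\<in>B. fscale (a d) (g d)) + (\<Sum>d\<in>K. fscale (a d) (g d))"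
    using assms(2-4) by (rule sum.union_disjoint)
  moreover have "(\<Sum>b\<in>B. fscale (a b + s b) (g b)) = (\<Sum>b\<in>B. fscale (a b) (g b)) + (\<Sum>b\<in>B. fscale (s b) (g b))"
    by (simp add: fs.scale_left_distrib sum.distrib)
  ultimately have "(\<Sum>b\<in>B. fscale (a b + s b) (g b))
      = (\<Sum>d\<in>B \<union> K. fscale (a d) (g d)) - (\<Sum>d\<in>K. fscale (a d) (u d))"
    by (simp add: algebra_simps)
  also have "\<dots> \<in> fspan A"
    using assms(5) by (intro fs.span_diff[OF assms(7)] fs.span_sum fs.span_scale) auto
  finally have "(\<Sum>b\<in>B. fscale (a b + s b) (g b)) \<in> fspan A" .
  from independent_modD[OF assms(1) this assms(8)] show ?thesis
    by (simp add: s_def)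
qed

lemma minimal_relation_mod:
  assumes "finite W" "v \<in> fspan A" "v \<in> fspan (g ` W)" "v \<noteq> 0"
  obtains D c where "D \<subseteq> W" "D \<noteq> {}" "\<And>d. d \<in> D \<Longrightarrow> c d \<noteq> 0"
    "(\<Sum>d\<in>D. fscale (c d) (g d)) \<in> fspan A" "(\<Sum>d\<in>D. fscale (c d) (g d)) \<noteq> 0"
    "\<And>f k. k \<in> D \<Longrightarrow> f k = 0 \<Longrightarrow> (\<Sum>d\<in>D. fscale (f d) (g d)) \<in> fspan A \<Longrightarrow>
      (\<Sum>d\<in>D. fscale (f d) (g d)) = 0"
proof -
  define P where "P D \<longleftrightarrow> D \<subseteq> W \<and> (\<exists>c. (\<forall>d\<in>D. c d \<noteq> 0) \<and>
    (\<Sum>d\<in>D. fscale (c d) (g d)) \<in> fspan A \<and> (\<Sum>d\<in>D. fscale (c d) (g d)) \<noteq> 0)" for D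
  have P_support: "P {d\<in>D. f d \<noteq> 0}"
    if "D \<subseteq> W" "(\<Sum>d\<in>D. fscale (f d) (g d)) \<in> fspan A" "(\<Sum>d\<in>D. fscale (f d) (g d)) \<noteq> 0"
    for D f
  proof -
    have "(\<Sum>d\<in>{d\<in>D. f d \<noteq> 0}. fscale (f d) (g d)) = (\<Sum>d\<in>D. fscale (f d) (g d))"
      using that(1) assms(1) finite_subset by (intro sum.mono_neutral_left) auto
    then show ?thesis
      unfolding P_def using that by auto
  qed
  obtain u c where "u \<in> fspan {}" "v = u + (\<Sum>d\<in>W. fscale (c d) (g d))"
    using span_Un_imageE[of W v "{}" g] assms(1,3) by auto
  then have "P {d\<in>W. c d \<noteq> 0}"
    using assms(2,4) by (intro P_support) auto
  then obtain D where "P D" and D_min: "\<And>D'. P D' \<Longrightarrow> card D \<le> card D'"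
    using ex_has_least_nat[of P _ card] by metis
  then obtain c where D: "D \<subseteq> W" "\<forall>d\<in>D. c d \<noteq> 0"
    "(\<Sum>d\<in>D. fscale (c d) (g d)) \<in> fspan A" "(\<Sum>d\<in>D. fscale (c d) (g d)) \<noteq> 0"
    unfolding P_def by blast
  have "(\<Sum>d\<in>D. fscale (f d) (g d)) = 0"
    if "k \<in> D" "f k = 0" "(\<Sum>d\<in>D. fscale (f d) (g d)) \<in> fspan A" for f k
  proof (rule ccontr)
    assume "(\<Sum>d\<in>D. fscale (f d) (g d)) \<noteq> 0"
    then have "card D \<le> card {d\<in>D. f d \<noteq> 0}"
      using D(1) that(3) by (intro D_min P_support)
    moreover have "card {d\<in>D. f d \<noteq> 0} < card D"
      using that(1,2) D(1) assms(1) finite_subset by (intro psubset_card_mono) auto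
    ultimately show False
      by simp
  qed
  moreover have "D \<noteq> {}"
    using D(4) by auto
  ultimately show ?thesis
    using that[of D c] D by blast
qed

lemma independent_mod_remove_if_minimal:
  assumes "finite D" "d0 \<in> D"
    and relation: "(\<Sum>d\<in>D. fscale (c d) (g d)) \<in> fspan A" "(\<Sum>d\<in>D. fscale (c d) (g d)) \<noteq> 0"
    and minimal: "\<And>f k. k \<in> D \<Longrightarrow> f k = 0 \<Longrightarrow> (\<Sum>d\<in>D. fscale (f d) (g d)) \<in> fspan A \<Longrightarrow>
      (\<Sum>d\<in>D. fscale (f d) (g d)) = 0"
  shows "independent_mod A g (D - {d0})"
  unfolding independent_mod_def
proof (intro allI impI ballI)
  fix e k
  assume e: "(\<Sum>d\<in>D - {d0}. fscale (e d) (g d)) \<in> fspan A" and k: "k \<in> D - {d0}"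
  define e' where "e' = e(d0 := 0)"
  have "(\<Sum>d\<in>D - {d0}. fscale (e' d) (g d)) = (\<Sum>d\<in>D - {d0}. fscale (e d) (g d))"
    by (intro sum.cong) (auto simp: e'_def)
  then have "(\<Sum>d\<in>D. fscale (e' d) (g d)) = (\<Sum>d\<in>D - {d0}. fscale (e d) (g d))"
    using sum.remove[OF assms(1,2), of "\<lambda>d. fscale (e' d) (g d)"] by (simp add: e'_def)
  then have e'_zero: "(\<Sum>d\<in>D. fscale (e' d) (g d)) = 0"
    using minimal[OF assms(2), of e'] e by (simp add: e'_def)
  show "e k = 0"
  proof (rule ccontr)
    assume "e k \<noteq> 0"
    define c' where "c' d = c d - (c k / e' k) * e' d" for d
    have "(\<Sum>d\<in>D. fscale (c' d) (g d))
        = (\<Sum>d\<in>D. fscale (c d) (g d)) - fscale (c k / e' k) (\<Sum>d\<in>D. fscale (e' d) (g d))"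
      by (simp add: c'_def fs.scale_left_diff_distrib sum_subtractf fs.scale_sum_right)
    then have "(\<Sum>d\<in>D. fscale (c' d) (g d)) = (\<Sum>d\<in>D. fscale (c d) (g d))"
      using e'_zero by simp
    moreover have "c' k = 0"
      using k \<open>e k \<noteq> 0\<close> by (simp add: c'_def e'_def)
    ultimately show False
      using minimal[of k c'] k relation by simp
  qed
qed

abbreviation tprods :: "('k \<Rightarrow> 'i \<Rightarrow> 'a::field) \<Rightarrow> ('k \<Rightarrow> 'j \<Rightarrow> 'a) \<Rightarrow> 'k \<Rightarrow> ('i \<times> 'j \<Rightarrow> 'a)" where
  "tprods x y \<equiv> \<lambda>a. tprod (x a) (y a)"

lemma row_in_span_tprods:
  assumes "w \<in> fspan (tprods x y ` S)"
  shows "(\<lambda>j. w (i, j)) \<in> fspan (y ` S)"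
  using assms
proof (induction rule: fs.span_induct_alt)
  case base
  then show ?case
    using fs.span_zero by (simp add: zero_fun_def)
next
  case (step c t w)
  then obtain a where "a \<in> S" "t = tprod (x a) (y a)"
    by blast
  moreover have "(\<lambda>j. (fscale c t + w) (i, j)) = fscale (c * x a i) (y a) + (\<lambda>j. w (i, j))"
    using calculation by (simp add: fun_eq_iff fscale_def tprod_def)
  ultimately show ?case
    using step.IH by (auto intro: fs.span_add fs.span_scale fs.span_base)
qed

lemma column_in_span_tprods:
  assumes "w \<in> fspan (tprods x y ` S)"
  shows "(\<lambda>i. w (i, j)) \<in> fspan (x ` S)"
  using assms
proof (induction rule: fs.span_induct_alt)
  case base
  then show ?case
    using fs.span_zero by (simp add: zero_fun_def)
next
  case (step c t w)
  then obtain a where "a \<in> S" "t = tprod (x a) (y a)"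
    by blast
  moreover have "(\<lambda>i. (fscale c t + w) (i, j)) = fscale (c * y a j) (x a) + (\<lambda>i. w (i, j))"
    using calculation by (simp add: fun_eq_iff fscale_def tprod_def algebra_simps)
  ultimately show ?case
    using step.IH by (auto intro: fs.span_add fs.span_scale fs.span_base)
qed

lemma column_sum_tprods:
  "(\<lambda>i. (\<Sum>d\<in>D. fscale (c d) (tprod (x d) (y d))) (i, j)) = (\<Sum>d\<in>D. fscale (c d * y d j) (x d))"
  by (simp add: fun_eq_iff sum_apply fscale_def tprod_def algebra_simps)

lemma row_sum_tprods:
  "(\<lambda>j. (\<Sum>d\<in>D. fscale (c d) (tprod (x d) (y d))) (i, j)) = (\<Sum>d\<in>D. fscale (c d * x d i) (y d))"
  by (simp add: fun_eq_iff sum_apply fscale_def tprod_def algebra_simps)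

lemma right_factor_in_span_if_relation:
  fixes x :: "'k \<Rightarrow> 'i \<Rightarrow> 'a::field" and y :: "'k \<Rightarrow> 'j \<Rightarrow> 'a"
  assumes "finite D" "B \<subseteq> D" "independent_mod (x ` U) x B" "x ` D \<subseteq> fspan (x ` U \<union> x ` B)"
    and v: "(\<Sum>d\<in>D. fscale (c d) (tprod (x d) (y d))) \<in> fspan (tprods x y ` U)"
    and "b \<in> B" "c b \<noteq> 0"
  shows "y b \<in> fspan (y ` (D - B))"
proof -
  define K where "K = D - B"
  have "finite B" "finite K" "B \<inter> K = {}" "B \<union> K = D"
    using assms(1,2) finite_subset unfolding K_def by auto
  have "\<forall>d\<in>K. \<exists>u m. u \<in> fspan (x ` U) \<and> x d = u + (\<Sum>b\<in>B. fscale (m b) (x b))"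
    using assms(4) span_Un_imageE[OF \<open>finite B\<close>] unfolding K_def by blast
  then obtain u m where u: "\<And>d. d \<in> K \<Longrightarrow> u d \<in> fspan (x ` U)"
    and m: "\<And>d. d \<in> K \<Longrightarrow> x d = u d + (\<Sum>b\<in>B. fscale (m d b) (x b))"
    by metis
  have "c b * y b j + (\<Sum>d\<in>K. c d * y d j * m d b) = 0" for j
  proof (rule expansion_coefficient_eq_0[OF assms(3) \<open>finite B\<close> \<open>finite K\<close> \<open>B \<inter> K = {}\<close> u m])
    show "(\<Sum>d\<in>B \<union> K. fscale (c d * y d j) (x d)) \<in> fspan (x ` U)"
      using column_in_span_tprods[OF v, of j] \<open>B \<union> K = D\<close> by (simp add: column_sum_tprods)
  qed (use assms(6) in auto)
  then have "y b j = - (\<Sum>d\<in>K. c d * y d j * m d b) / c b" for j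
    using assms(7) by (simp add: field_simps eq_neg_iff_add_eq_0)
  then have "y b j = (\<Sum>d\<in>K. fscale (- c d * m d b / c b) (y d)) j" for j
    by (simp add: sum_apply fscale_def sum_divide_distrib flip: sum_negf) (simp add: algebra_simps)
  then have "y b = (\<Sum>d\<in>K. fscale (- c d * m d b / c b) (y d))"
    by (rule ext)
  also have "\<dots> \<in> fspan (y ` (D - B))"
    unfolding K_def by (intro fs.span_sum fs.span_scale fs.span_base) auto
  finally show ?thesis .
qed

lemma dim_right_factors_Un_less:
  fixes x :: "'k \<Rightarrow> 'i \<Rightarrow> 'a::field" and y :: "'k \<Rightarrow> 'j \<Rightarrow> 'a"
  assumes "finite U" "finite D" "B \<subseteq> D" "independent_mod (x ` U) x B"
    and "x ` D \<subseteq> fspan (x ` U \<union> x ` B)" "\<And>d. d \<in> D \<Longrightarrow> c d \<noteq> 0"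
    and v_in: "(\<Sum>d\<in>D. fscale (c d) (tprod (x d) (y d))) \<in> fspan (tprods x y ` U)"
    and v_nz: "(\<Sum>d\<in>D. fscale (c d) (tprod (x d) (y d))) \<noteq> 0"
  shows "fdim (y ` (U \<union> D)) < fdim (y ` U) + card (D - B)"
proof -
  let ?K = "D - B"
  have y_D: "y ` D \<subseteq> fspan (y ` ?K)"
    using right_factor_in_span_if_relation[OF assms(2-5) v_in _ assms(6)] assms(3)
    by (auto intro: fs.span_base)
  obtain p where "(\<Sum>d\<in>D. fscale (c d) (tprod (x d) (y d))) p \<noteq> 0"
    using v_nz by (auto simp: fun_eq_iff)
  then obtain i j where "(\<Sum>d\<in>D. fscale (c d) (tprod (x d) (y d))) (i, j) \<noteq> 0"
    by (cases p) auto
  then have "(\<lambda>j. (\<Sum>d\<in>D. fscale (c d) (tprod (x d) (y d))) (i, j)) \<noteq> 0"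
    by (auto simp: fun_eq_iff)
  then have "(\<Sum>d\<in>D. fscale (c d * x d i) (y d)) \<noteq> 0"
    unfolding row_sum_tprods .
  moreover have "(\<Sum>d\<in>D. fscale (c d * x d i) (y d)) \<in> fspan (y ` U)"
    using row_in_span_tprods[OF v_in, of i] by (simp add: row_sum_tprods)
  moreover have "(\<Sum>d\<in>D. fscale (c d * x d i) (y d)) \<in> fspan (y ` ?K)"
    using y_D by (intro fs.span_sum fs.span_scale) auto
  ultimately have less: "fdim (y ` U \<union> y ` ?K) < fdim (y ` U) + card ?K"
    using assms(1,2) by (intro dim_Un_image_less) auto
  have "y ` U \<subseteq> fspan (y ` U \<union> y ` ?K)"
    using fs.span_superset[of "y ` U \<union> y ` ?K"] by blast
  moreover have "y ` D \<subseteq> fspan (y ` U \<union> y ` ?K)"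
    using y_D fs.span_mono[of "y ` ?K" "y ` U \<union> y ` ?K"] by blast
  ultimately have "y ` (U \<union> D) \<subseteq> fspan (y ` U \<union> y ` ?K)"
    by (simp add: image_Un)
  then have "fdim (y ` (U \<union> D)) \<le> fdim (y ` U \<union> y ` ?K)"
    using assms(1,2) by (intro dim_mono_finite) auto
  with less show ?thesis
    by linarith
qed

lemma dim_factors_Un_less:
  fixes x :: "'k \<Rightarrow> 'i \<Rightarrow> 'a::field" and y :: "'k \<Rightarrow> 'j \<Rightarrow> 'a"
  assumes "finite U" "finite D" "\<And>d. d \<in> D \<Longrightarrow> c d \<noteq> 0"
    and "(\<Sum>d\<in>D. fscale (c d) (tprod (x d) (y d))) \<in> fspan (tprods x y ` U)"
    and "(\<Sum>d\<in>D. fscale (c d) (tprod (x d) (y d))) \<noteq> 0"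
  shows "fdim (x ` (U \<union> D)) + fdim (y ` (U \<union> D)) < fdim (x ` U) + fdim (y ` U) + card D"
proof -
  obtain B where B: "B \<subseteq> D" "x ` D \<subseteq> fspan (x ` U \<union> x ` B)" "independent_mod (x ` U) x B"
    using independent_mod_spanning_subset[OF assms(2)] .
  have "finite B"
    using assms(2) B(1) finite_subset by blast
  have "fdim (x ` (U \<union> D)) \<le> fdim (x ` U) + card B"
    using dim_Un_le_if_spanning[OF _ \<open>finite B\<close> B(2)] assms(1) by (simp add: image_Un)
  moreover have "fdim (y ` (U \<union> D)) < fdim (y ` U) + card (D - B)"
    using assms(1,2) B(1,3,2) assms(3-5) by (rule dim_right_factors_Un_less)
  moreover have "card B + card (D - B) = card D"
    using assms(2) B(1) \<open>finite B\<close> by (simp add: card_Diff_subset card_mono)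
  ultimately show ?thesis
    by linarith
qed

definition dim_excess :: "('k \<Rightarrow> 'i \<Rightarrow> 'a::field) \<Rightarrow> ('k \<Rightarrow> 'j \<Rightarrow> 'a) \<Rightarrow> 'k set \<Rightarrow> int" where
  "dim_excess x y U = int (fdim (x ` U)) + int (fdim (y ` U)) - int (fdim (tprods x y ` U))"

lemma fdim_singleton: "fdim {v} = (if v = 0 then 0 else 1)"
  using dim_insert_finite[of "{}" v] fs.dim_eq_card_independent[OF fs.independent_empty] by simp

lemma tprod_nonzero: "x \<noteq> 0 \<Longrightarrow> y \<noteq> 0 \<Longrightarrow> tprod x y \<noteq> 0"
  by (auto simp: fun_eq_iff tprod_def)

lemma dim_excess_singleton: "x a \<noteq> 0 \<Longrightarrow> y a \<noteq> 0 \<Longrightarrow> dim_excess x y {a} = 1"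
  by (simp add: dim_excess_def fdim_singleton tprod_nonzero)

lemma dim_excess_Un_le:
  fixes x :: "'k \<Rightarrow> 'i \<Rightarrow> 'a::field" and y :: "'k \<Rightarrow> 'j \<Rightarrow> 'a"
  assumes "finite U" "finite D" "d0 \<in> D" "\<And>d. d \<in> D \<Longrightarrow> c d \<noteq> 0"
    and "(\<Sum>d\<in>D. fscale (c d) (tprod (x d) (y d))) \<in> fspan (tprods x y ` U)"
    and "(\<Sum>d\<in>D. fscale (c d) (tprod (x d) (y d))) \<noteq> 0"
    and "independent_mod (tprods x y ` U) (tprods x y) (D - {d0})"
  shows "dim_excess x y (U \<union> D) \<le> dim_excess x y U"
proof -
  let ?t = "tprods x y"
  have "fdim (?t ` U) + card (D - {d0}) = fdim (?t ` U \<union> ?t ` (D - {d0}))"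
    using assms(1,2,7) by (intro dim_Un_image_eq[symmetric]) auto
  also have "\<dots> \<le> fdim (?t ` (U \<union> D))"
    using assms(1,2) fs.span_superset[of "?t ` (U \<union> D)"] by (intro dim_mono_finite) auto
  finally have "fdim (?t ` U) + card D \<le> fdim (?t ` (U \<union> D)) + 1"
    using assms(2,3) by simp
  moreover have "fdim (x ` (U \<union> D)) + fdim (y ` (U \<union> D)) < fdim (x ` U) + fdim (y ` U) + card D"
    using assms(1,2,4,5,6) by (rule dim_factors_Un_less)
  ultimately show ?thesis
    unfolding dim_excess_def by linarith
qed

lemma dim_excess_le_if_spans_meet:
  fixes x :: "'k \<Rightarrow> 'i \<Rightarrow> 'a::field" and y :: "'k \<Rightarrow> 'j \<Rightarrow> 'a"
  assumes "finite E"
    and spans_meet: "\<And>S. S \<subseteq> E \<Longrightarrow> S \<noteq> {} \<Longrightarrow> S \<noteq> E \<Longrightarrow>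
      fspan (tprods x y ` S) \<inter> fspan (tprods x y ` (E - S)) \<noteq> {0}"
    and "U \<subseteq> E" "U \<noteq> {}"
  shows "dim_excess x y E \<le> dim_excess x y U"
  using assms(3,4)
proof (induction "card (E - U)" arbitrary: U rule: less_induct)
  case less
  show ?case
  proof (cases "U = E")
    case False
    have "finite U"
      using less.prems(1) assms(1) finite_subset by blast
    obtain v where v: "v \<in> fspan (tprods x y ` U)" "v \<in> fspan (tprods x y ` (E - U))" "v \<noteq> 0"
      using spans_meet[OF less.prems False] fs.span_zero by blast
    obtain D c where D: "D \<subseteq> E - U" "D \<noteq> {}" "\<And>d. d \<in> D \<Longrightarrow> c d \<noteq> 0"
      "(\<Sum>d\<in>D. fscale (c d) (tprod (x d) (y d))) \<in> fspan (tprods x y ` U)"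
      "(\<Sum>d\<in>D. fscale (c d) (tprod (x d) (y d))) \<noteq> 0"
      and minimal: "\<And>f k. k \<in> D \<Longrightarrow> f k = 0 \<Longrightarrow>
        (\<Sum>d\<in>D. fscale (f d) (tprod (x d) (y d))) \<in> fspan (tprods x y ` U) \<Longrightarrow>
        (\<Sum>d\<in>D. fscale (f d) (tprod (x d) (y d))) = 0"
      by (rule minimal_relation_mod[OF finite_Diff[OF assms(1)] v]) blast
    then obtain d0 where "d0 \<in> D"
      by blast
    have "finite D"
      using D(1) assms(1) finite_subset by blast
    have "independent_mod (tprods x y ` U) (tprods x y) (D - {d0})"
      using \<open>finite D\<close> \<open>d0 \<in> D\<close> D(4,5) minimal by (rule independent_mod_remove_if_minimal)
    then have "dim_excess x y (U \<union> D) \<le> dim_excess x y U"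
      using \<open>finite U\<close> \<open>finite D\<close> \<open>d0 \<in> D\<close> D(3-5) by (intro dim_excess_Un_le)
    moreover have "card (E - (U \<union> D)) < card (E - U)"
      using D(1,2) assms(1) by (intro psubset_card_mono) auto
    then have "dim_excess x y E \<le> dim_excess x y (U \<union> D)"
      by (rule less.hyps) (use less.prems D(1) in auto)
    ultimately show ?thesis
      by linarith
  qed simp
qed

lemma connected_family_spans_meet:
  assumes "connected_family n v" "S \<subseteq> {1..n}" "S \<noteq> {}" "S \<noteq> {1..n}"
  shows "fspan (v ` S) \<inter> fspan (v ` ({1..n} - S)) \<noteq> {0}"
proof
  assume meet: "fspan (v ` S) \<inter> fspan (v ` ({1..n} - S)) = {0}"
  have "finite S"
    using assms(2) finite_subset by blast
  then have "1 \<le> card S"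
    using assms(3) by (simp add: Suc_le_eq card_gt_0_iff)
  moreover have "card S \<le> n - 1"
    using assms(2,4) psubset_card_mono[of "{1..n}" S] by fastforce
  moreover have "v ` {1..n} = v ` S \<union> v ` ({1..n} - S)"
    using assms(2) by auto
  then have "fspan (v ` {1..n}) = {p + q |p q. p \<in> fspan (v ` S) \<and> q \<in> fspan (v ` ({1..n} - S))}"
    by (simp add: fs.span_Un)
  ultimately have "splits n v"
    unfolding splits_def using assms(2) meet by (intro exI[of _ S]) simp
  with assms(1) show False
    by (simp add: connected_family_def)
qed

theorem theorem4p2:
  fixes n :: nat
    and x :: "nat \<Rightarrow> ('i \<Rightarrow> 'a::field)"
    and y :: "nat \<Rightarrow> ('j \<Rightarrow> 'a)"
  assumes "n \<ge> 2"
    and "\<And>a. a \<in> {1..n} \<Longrightarrow> x a \<noteq> 0"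
    and "\<And>a. a \<in> {1..n} \<Longrightarrow> y a \<noteq> 0"
    and "connected_family n (\<lambda>a. tprod (x a) (y a))"
  shows "fdim (fspan ((\<lambda>a. tprod (x a) (y a)) ` {1..n}))
           \<ge> fdim (fspan (x ` {1..n})) + fdim (fspan (y ` {1..n})) - 1"
proof -
  have "1 \<in> {1..n}"
    using assms(1) by simp
  have "dim_excess x y {1..n} \<le> dim_excess x y {1}"
    using connected_family_spans_meet[OF assms(4)] \<open>1 \<in> {1..n}\<close>
    by (intro dim_excess_le_if_spans_meet) auto
  also have "\<dots> = 1"
    using assms(2,3) \<open>1 \<in> {1..n}\<close> by (intro dim_excess_singleton)
  finally show ?thesis
    unfolding dim_excess_def fs.dim_span by linarith
qed

end
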